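(* Let $S=\{\rho_1=0<\rho_2<\cdots\}$ be an Arf numerical semigroup with conductor $c=\rho_r$. Let $d$ be an odd integer with $1\le d\le 2r-3$, write $d=2t+1$, and put $p_t=c+\rho_{t+1}-1$. Then $$\{\rho\in S:\ \#A[\rho]<d\}\subseteq[0,p_t]\cap S.$$
   Context: A numerical semigroup is a submonoid $S$ of $(\mathbb{N}_0,+)$ with finite complement, with elements listed increasingly. $S$ is Arf if $\rho_i+\rho_j-\rho_k\in S$ for all positive integers $i\ge j\ge k$. The conductor $c$ is the smallest integer such that all integers $\ge c$ lie in $S$, with $c=\rho_r$. For $\rho\in S$, $A[\rho]=\{p\in S:\ \rho-p\in S\}$. *)

theory Defs
  imports Main "HOL-Library.Infinite_Set"
begin

definition numerical_semigroup :: "nat set \<Rightarrow> bool" where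
  "numerical_semigroup S \<longleftrightarrow> 0 \<in> S \<and> (\<forall>x\<in>S. \<forall>y\<in>S. x + y \<in> S) \<and> finite (UNIV - S)"

text \<open>The i-th element rho_i of S (1-indexed, increasing order), so rho S 1 = 0.\<close>
definition rho :: "nat set \<Rightarrow> nat \<Rightarrow> nat" where
  "rho S i = enumerate S (i - 1)"

definition Arf :: "nat set \<Rightarrow> bool" where
  "Arf S \<longleftrightarrow> (\<forall>i j k. 1 \<le> k \<and> k \<le> j \<and> j \<le> i \<longrightarrow> rho S i + rho S j - rho S k \<in> S)"

definition conductor :: "nat set \<Rightarrow> nat" where
  "conductor S = (LEAST c. \<forall>n\<ge>c. n \<in> S)"

text \<open>A[rho] = {p in S : rho - p in S}; elements of S are nonnegative, so p \<le> rho.\<close>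
definition Aset :: "nat set \<Rightarrow> nat \<Rightarrow> nat set" where
  "Aset S x = {p \<in> S. p \<le> x \<and> x - p \<in> S}"

end

theory Submission
  imports Defs
begin

text \<open>If \<open>x \<ge> c + \<rho>\<^bsub>t+1\<^esub>\<close>, then each of the \<open>t + 1\<close> elements \<open>p = \<rho>\<^sub>1, \<dots>, \<rho>\<^bsub>t+1\<^esub>\<close> lies below
  the conductor while \<open>x - p \<ge> c\<close>, so both \<open>p\<close> and \<open>x - p\<close> belong to \<open>A[x]\<close>, and these
  \<open>2t + 2\<close> numbers are pairwise distinct. Hence \<open>#A[x] \<ge> 2t + 2 > d\<close>.\<close>

lemma numerical_semigroup_infinite: "numerical_semigroup S \<Longrightarrow> infinite S"
  unfolding numerical_semigroup_def
  using Diff_infinite_finite infinite_UNIV_nat by blast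

lemma numerical_semigroup_conductor_le_mem:
  assumes "numerical_semigroup S" "conductor S \<le> n"
  shows "n \<in> S"
proof -
  have "finite (UNIV - S)" using assms(1) unfolding numerical_semigroup_def by blast
  then obtain m where "\<forall>y\<in>UNIV - S. y < m" using finite_nat_bounded by blast
  then have "\<forall>n\<ge>m. n \<in> S" by (metis DiffI UNIV_I not_le)
  then have "\<forall>n\<ge>conductor S. n \<in> S" unfolding conductor_def by (rule LeastI)
  with assms(2) show ?thesis by blast
qed

lemma rho_strict_mono: "infinite S \<Longrightarrow> 1 \<le> i \<Longrightarrow> i < j \<Longrightarrow> rho S i < rho S j"
  unfolding rho_def by (simp add: enumerate_mono)

lemma rho_in: "infinite S \<Longrightarrow> rho S i \<in> S"
  unfolding rho_def by (simp add: enumerate_in_set)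

lemma finite_Aset: "finite (Aset S x)"
  by (rule finite_subset[of _ "{..x}"]) (auto simp: Aset_def)

lemma card_Aset_ge_double:
  assumes S: "numerical_semigroup S"
    and P: "P \<subseteq> S" "\<forall>p\<in>P. p < conductor S" and x: "\<forall>p\<in>P. conductor S + p \<le> x"
  shows "2 * card P \<le> card (Aset S x)"
proof -
  let ?Q = "(\<lambda>p. x - p) ` P"
  have "finite P" using P(2) finite_nat_set_iff_bounded by blast
  have "inj_on (\<lambda>p. x - p) P"
  proof (rule inj_onI)
    fix p q assume "p \<in> P" "q \<in> P" "x - p = x - q"
    with x show "p = q" by (metis add_leD2 diff_diff_cancel)
  qed
  then have card_Q: "card ?Q = card P" by (rule card_image)
  have "P \<inter> ?Q = {}" using P(2) x by fastforce
  then have "card (P \<union> ?Q) = 2 * card P"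
    using card_Un_disjoint[of P ?Q] \<open>finite P\<close> card_Q by simp
  moreover have "P \<union> ?Q \<subseteq> Aset S x"
  proof -
    have "p \<in> Aset S x \<and> x - p \<in> Aset S x" if "p \<in> P" for p
    proof -
      have "p \<le> x" "conductor S \<le> x - p" using x that by auto
      then have "x - p \<in> S" "x - (x - p) = p"
        using numerical_semigroup_conductor_le_mem[OF S] by auto
      then show ?thesis using P(1) that \<open>p \<le> x\<close> by (auto simp: Aset_def)
    qed
    then show ?thesis by blast
  qed
  then have "card (P \<union> ?Q) \<le> card (Aset S x)" by (rule card_mono[OF finite_Aset])
  ultimately show ?thesis by simp
qed

lemma card_Aset_ge_double_rho:
  assumes S: "numerical_semigroup S"
    and k: "rho S k < conductor S" and x: "conductor S + rho S k \<le> x"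
  shows "2 * k \<le> card (Aset S x)"
proof -
  have inf: "infinite S" using S by (rule numerical_semigroup_infinite)
  have rho_le: "rho S i \<le> rho S k" if "i \<in> {1..k}" for i
    using rho_strict_mono[OF inf] that by (metis atLeastAtMost_iff le_eq_less_or_eq)
  have "inj_on (rho S) {1..k}"
    by (rule inj_onI) (metis atLeastAtMost_iff linorder_neqE_nat order_less_irrefl rho_strict_mono[OF inf])
  then have "card (rho S ` {1..k}) = k" by (simp add: card_image)
  moreover have "2 * card (rho S ` {1..k}) \<le> card (Aset S x)"
  proof (rule card_Aset_ge_double[OF S])
    show "rho S ` {1..k} \<subseteq> S" using rho_in[OF inf] by blast
    show "\<forall>p\<in>rho S ` {1..k}. p < conductor S" using rho_le k by fastforce
    show "\<forall>p\<in>rho S ` {1..k}. conductor S + p \<le> x" using rho_le x by fastforce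
  qed
  ultimately show ?thesis by simp
qed

theorem mainTheorem13:
  fixes S :: "nat set" and r d t :: nat
  assumes "numerical_semigroup S" and "Arf S"
    and "r \<ge> 1" and "rho S r = conductor S"
    and "1 \<le> d" and "d + 3 \<le> 2 * r" and "d = 2 * t + 1"
  shows "{x \<in> S. card (Aset S x) < d} \<subseteq> {0 .. conductor S + rho S (t + 1) - 1} \<inter> S"
proof
  fix x assume x: "x \<in> {x \<in> S. card (Aset S x) < d}"
  have "rho S (t + 1) < conductor S"
    using rho_strict_mono[OF numerical_semigroup_infinite[OF assms(1)], of "t + 1" r] assms
    by simp
  then have "\<not> conductor S + rho S (t + 1) \<le> x"
    using card_Aset_ge_double_rho[OF assms(1), of "t + 1" x] x assms(7) by auto
  then show "x \<in> {0 .. conductor S + rho S (t + 1) - 1} \<inter> S" using x by auto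
qed

end
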